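(* Let $(X,d,A)$ be a metric pair and $p\in[1,\infty]$. If $(X,d)$ is separable, then $(\overline{D}_p(X,A),W_p)$ is separable. Conversely, if $(\overline{D}_p(X,A),W_p)$ is separable, then $(X/A,d_p)$ is separable.
   Context: A metric on $X$ is a map $d:X\times X\to[0,\infty]$ with $d(x,x)=0$, symmetry and the triangle inequality (infinite distances allowed, $d(x,y)=0$ need not imply $x=y$); a metric pair $(X,d,A)$ is such a space with a closed subset $A$. Write $d(x,A)=\inf_{a\in A}d(x,a)$, $A^\delta=\{x:d(x,A)<\delta\}$. $\overline{D}(X,A)$ is the set of countable formal sums $\hat\alpha=\sum_{i\in I}x_i$ of points of $X\setminus A$ (repetitions allowed); $0$ the empty sum. A matching of $\hat\alpha=\sum_{i\in I}x_i$, $\hat\beta=\sum_{j\in J}y_j$ is a formal sum $\sum_{k\in K}(x_k,y_{\varphi(k)})+\sum_{i\in I\setminus K}(x_i,z_i)+\sum_{j\in J\setminus\varphi(K)}(w_j,y_j)$ with $K\subset I$, $\varphi$ injective, $z_i,w_j\in A$; its $p$-cost is the $\ell^p$ norm (sup norm if $p=\infty$) of the distances of paired points; $W_p$ is the infimum of $p$-costs. $u_\delta(\alpha)$, $\ell_\delta(\alpha)$ are the restrictions of $\hat\alpha$ to $X\setminus A^\delta$ and to $A^\delta\setminus A$. For $p<\infty$, $\overline{D}_p(X,A)=\{\alpha: |u_\infty(\alpha)|<\infty,\ W_p(\ell_\infty(\alpha),0)<\infty\}$; $\overline{D}_\infty(X,A)=\{\alpha:|u_\delta(\alpha)|<\infty\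 \forall\delta>0\}$. $X/A$ is the quotient set collapsing $A$ to a point, with the metric $d_p([x],[y])=\min\big(d(x,y),\|(d(x,A),d(y,A))\|_p\big)$ (which is well defined on $X/A$). *)

theory Defs
  imports "HOL-Analysis.Analysis"
begin

definition emetric_on :: "'a set \<Rightarrow> ('a \<Rightarrow> 'a \<Rightarrow> ennreal) \<Rightarrow> bool" where
  "emetric_on X d \<longleftrightarrow> (\<forall>x\<in>X. d x x = 0) \<and> (\<forall>x\<in>X. \<forall>y\<in>X. d x y = d y x)
     \<and> (\<forall>x\<in>X. \<forall>y\<in>X. \<forall>z\<in>X. d x z \<le> d x y + d y z)"

definition setdist_e :: "('a \<Rightarrow> 'a \<Rightarrow> ennreal) \<Rightarrow> 'a \<Rightarrow> 'a set \<Rightarrow> ennreal" where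
  "setdist_e d x A = (INF a\<in>A. d x a)"

definition eclosed :: "'a set \<Rightarrow> ('a \<Rightarrow> 'a \<Rightarrow> ennreal) \<Rightarrow> 'a set \<Rightarrow> bool" where
  "eclosed X d A \<longleftrightarrow> A \<subseteq> X \<and> (\<forall>x\<in>X. setdist_e d x A = 0 \<longrightarrow> x \<in> A)"

definition metric_pair :: "'a set \<Rightarrow> ('a \<Rightarrow> 'a \<Rightarrow> ennreal) \<Rightarrow> 'a set \<Rightarrow> bool" where
  "metric_pair X d A \<longleftrightarrow> emetric_on X d \<and> eclosed X d A"

definition separable_e :: "'b set \<Rightarrow> ('b \<Rightarrow> 'b \<Rightarrow> ennreal) \<Rightarrow> bool" where
  "separable_e S \<delta> \<longleftrightarrow> (\<exists>D\<subseteq>S. countable D \<and> (\<forall>x\<in>S. \<forall>e>0. \<exists>c\<in>D. \<delta> x c < e))"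

definition enn_pow :: "real \<Rightarrow> ennreal \<Rightarrow> ennreal" where
  "enn_pow q c = (if c = top then top else ennreal (enn2real c powr q))"

definition lpnorm :: "ennreal \<Rightarrow> ('i \<Rightarrow> ennreal) \<Rightarrow> 'i set \<Rightarrow> ennreal" where
  "lpnorm p f S = (if p = top then (SUP i\<in>S. f i)
      else enn_pow (1 / enn2real p) (\<Sum>\<^sub>\<infinity>i\<in>S. enn_pow (enn2real p) (f i)))"

text \<open>Countable formal sums: a countable index set (WLOG a subset of nat) and the points.\<close>
type_synonym 'a dgm = "nat set \<times> (nat \<Rightarrow> 'a)"

definition dgms :: "'a set \<Rightarrow> 'a set \<Rightarrow> 'a dgm set" where
  "dgms X A = {(I, x). \<forall>i\<in>I. x i \<in> X - A}"

definition empty_dgm :: "'a dgm" where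
  "empty_dgm = ({}, (\<lambda>_. undefined))"

definition matchings :: "'a set \<Rightarrow> 'a dgm \<Rightarrow> 'a dgm
    \<Rightarrow> (nat set \<times> (nat \<Rightarrow> nat) \<times> (nat \<Rightarrow> 'a) \<times> (nat \<Rightarrow> 'a)) set" where
  "matchings A \<alpha> \<beta> = {(K, \<phi>, z, w). K \<subseteq> fst \<alpha> \<and> inj_on \<phi> K \<and> \<phi> ` K \<subseteq> fst \<beta>
      \<and> (\<forall>i\<in>fst \<alpha> - K. z i \<in> A) \<and> (\<forall>j\<in>fst \<beta> - \<phi> ` K. w j \<in> A)}"

definition match_cost :: "ennreal \<Rightarrow> ('a \<Rightarrow> 'a \<Rightarrow> ennreal) \<Rightarrow> 'a dgm \<Rightarrow> 'a dgm
    \<Rightarrow> nat set \<Rightarrow> (nat \<Rightarrow> nat) \<Rightarrow> (nat \<Rightarrow> 'a) \<Rightarrow> (nat \<Rightarrow> 'a) \<Rightarrow> ennreal" where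
  "match_cost p d \<alpha> \<beta> K \<phi> z w =
     lpnorm p (\<lambda>s. case s of
                  Inl i \<Rightarrow> (if i \<in> K then d (snd \<alpha> i) (snd \<beta> (\<phi> i)) else d (snd \<alpha> i) (z i))
                | Inr j \<Rightarrow> d (w j) (snd \<beta> j))
       (Inl ` fst \<alpha> \<union> Inr ` (fst \<beta> - \<phi> ` K))"

definition Wp :: "ennreal \<Rightarrow> ('a \<Rightarrow> 'a \<Rightarrow> ennreal) \<Rightarrow> 'a set \<Rightarrow> 'a dgm \<Rightarrow> 'a dgm \<Rightarrow> ennreal" where
  "Wp p d A \<alpha> \<beta> = (INF m\<in>matchings A \<alpha> \<beta>.
      (case m of (K, \<phi>, z, w) \<Rightarrow> match_cost p d \<alpha> \<beta> K \<phi> z w))"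

definition u_part :: "('a \<Rightarrow> 'a \<Rightarrow> ennreal) \<Rightarrow> 'a set \<Rightarrow> ennreal \<Rightarrow> 'a dgm \<Rightarrow> 'a dgm" where
  "u_part d A \<delta> \<alpha> = ({i\<in>fst \<alpha>. \<not> setdist_e d (snd \<alpha> i) A < \<delta>}, snd \<alpha>)"

definition l_part :: "('a \<Rightarrow> 'a \<Rightarrow> ennreal) \<Rightarrow> 'a set \<Rightarrow> ennreal \<Rightarrow> 'a dgm \<Rightarrow> 'a dgm" where
  "l_part d A \<delta> \<alpha> = ({i\<in>fst \<alpha>. setdist_e d (snd \<alpha> i) A < \<delta>}, snd \<alpha>)"

definition Dp :: "ennreal \<Rightarrow> ('a \<Rightarrow> 'a \<Rightarrow> ennreal) \<Rightarrow> 'a set \<Rightarrow> 'a set \<Rightarrow> 'a dgm set" where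
  "Dp p d X A = (if p = top
      then {\<alpha>\<in>dgms X A. \<forall>\<delta>::real. \<delta> > 0 \<longrightarrow> finite (fst (u_part d A (ennreal \<delta>) \<alpha>))}
      else {\<alpha>\<in>dgms X A. finite (fst (u_part d A top \<alpha>)) \<and> Wp p d A (l_part d A top \<alpha>) empty_dgm < top})"

definition dq :: "ennreal \<Rightarrow> ('a \<Rightarrow> 'a \<Rightarrow> ennreal) \<Rightarrow> 'a set \<Rightarrow> 'a \<Rightarrow> 'a \<Rightarrow> ennreal" where
  "dq p d A x y = min (d x y)
      (lpnorm p (\<lambda>b. if b then setdist_e d x A else setdist_e d y A) (UNIV :: bool set))"

definition quotX :: "'a set \<Rightarrow> 'a set \<Rightarrow> 'a set set" where
  "quotX X A = (\<lambda>x. if x \<in> A then A else {x}) ` X"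

definition dquot :: "ennreal \<Rightarrow> ('a \<Rightarrow> 'a \<Rightarrow> ennreal) \<Rightarrow> 'a set \<Rightarrow> 'a set \<Rightarrow> 'a set \<Rightarrow> ennreal" where
  "dquot p d A c c' = dq p d A (SOME x. x \<in> c) (SOME x. x \<in> c')"

end

theory Submission
  imports Defs
begin

text \<open>
  If \<open>D\<close> is countable and dense in \<open>X\<close>, the finite diagrams with points in \<open>D - A\<close> are
  dense in \<open>D\<^sub>p(X, A)\<close>: all but finitely many points of a diagram can be matched to \<open>A\<close>
  at cost below \<open>\<epsilon>\<close> (for \<open>p = \<infinity>\<close> only finitely many points are \<open>\<epsilon>\<close>-far from \<open>A\<close>;
  for \<open>p < \<infinity>\<close> the \<open>p\<close>-th powers of the distances to \<open>A\<close> form a convergent series),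
  and the finitely many remaining points are moved to nearby points of \<open>D - A\<close>, which
  exist because \<open>A\<close> is closed. Conversely, if a countable family of diagrams is dense, the
  classes of its points together with the class of \<open>A\<close> are dense in \<open>X/A\<close>: a cheap
  matching of the one-point diagram \<open>[x]\<close> to a nearby diagram of the family either pairs
  \<open>x\<close> with a close point or sends it close to \<open>A\<close>.
\<close>

section \<open>Sums and \<open>\<ell>\<^sup>p\<close> norms in \<open>[0, \<infinity>]\<close>\<close>

lemma ennreal_summable_on [simp]: "(f :: 'a \<Rightarrow> ennreal) summable_on S"
  by (simp add: nonneg_summable_on_complete)

lemma ennreal_infsum_split_finite:
  fixes g :: "'a \<Rightarrow> ennreal"
  assumes "finite F" "F \<subseteq> S"
  shows "infsum g S = sum g F + infsum g (S - F)"
proof -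
  have "infsum g S = infsum g (F \<union> (S - F))"
    using assms(2) by (simp add: Un_absorb1)
  also have "\<dots> = infsum g F + infsum g (S - F)"
    by (rule infsum_Un_disjoint) auto
  finally show ?thesis using assms(1) by simp
qed

lemma ennreal_infsum_tail_less:
  fixes g :: "'a \<Rightarrow> ennreal"
  assumes "infsum g L < top" "0 < \<epsilon>"
  obtains F where "finite F" "F \<subseteq> L" "infsum g (L - F) < \<epsilon>"
proof (cases "infsum g L < \<epsilon>")
  case True
  then show ?thesis by (intro that[of "{}"]) auto
next
  case False
  define S where "S = infsum g L"
  have S_SUP: "S = (SUP F\<in>{F. finite F \<and> F \<subseteq> L}. sum g F)"
    unfolding S_def by (rule nonneg_infsum_complete) auto
  have "S - \<epsilon> < S"
    using False assms unfolding S_def by (simp add: ennreal_between)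
  then obtain F where F: "finite F" "F \<subseteq> L" "S - \<epsilon> < sum g F"
    unfolding S_SUP by (auto simp: less_SUP_iff)
  have S_split: "S = sum g F + infsum g (L - F)"
    using ennreal_infsum_split_finite[OF F(1,2)] by (simp add: S_def)
  have "infsum g (L - F) < \<epsilon>"
  proof (rule ccontr)
    assume "\<not> infsum g (L - F) < \<epsilon>"
    then have "sum g F + \<epsilon> \<le> S"
      using S_split by (simp add: add_left_mono)
    then have "sum g F \<le> S - \<epsilon>"
      using assms False unfolding S_def by (simp add: ennreal_le_minus_iff)
    then show False using F(3) by simp
  qed
  with F show ?thesis by (intro that)
qed

lemma enn_pow_less_top_iff [simp]: "enn_pow q c < top \<longleftrightarrow> c < top"
  by (simp add: enn_pow_def top.not_eq_extremum)

lemma enn_pow_0 [simp]: "enn_pow q 0 = 0"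
  by (simp add: enn_pow_def)

lemma enn_pow_enn_pow_inverse:
  assumes "q > 0"
  shows "enn_pow (1 / q) (enn_pow q c) = c"
proof (cases c)
  case (real r)
  then have "(r powr q) powr (1 / q) = r"
    using assms by (simp add: powr_powr)
  with real show ?thesis by (simp add: enn_pow_def)
qed (simp add: enn_pow_def)

lemma enn_pow_mono:
  assumes "q > 0" "c \<le> c'"
  shows "enn_pow q c \<le> enn_pow q c'"
proof (cases c')
  case (real r')
  with assms obtain r where "c = ennreal r" "0 \<le> r" "r \<le> r'"
    by (cases c) (auto simp: ennreal_le_iff2 top_unique)
  with real assms show ?thesis by (simp add: enn_pow_def powr_mono2)
qed (simp add: enn_pow_def)

lemma enn_pow_less_ennreal_powr_iff:
  assumes "q > 0" "e \<ge> 0"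
  shows "enn_pow q c < ennreal (e powr q) \<longleftrightarrow> c < ennreal e"
proof (cases c)
  case (real r)
  have "r powr q < e powr q \<longleftrightarrow> r < e" if "r \<ge> 0"
    using that assms
    by (metis powr_gt_zero powr_less_mono2 powr_non_neg powr_less_cancel2 powr_ge_zero
        less_eq_real_def)
  with real assms show ?thesis by (simp add: enn_pow_def ennreal_less_iff)
qed (simp add: enn_pow_def)

lemma enn2real_pos: "0 < p \<Longrightarrow> p \<noteq> top \<Longrightarrow> 0 < enn2real p"
  by (simp add: enn2real_positive_iff less_top)

lemma lpnorm_ge:
  assumes "0 < p" "i \<in> S"
  shows "f i \<le> lpnorm p f S"
proof (cases "p = top")
  case True
  with assms show ?thesis by (simp add: lpnorm_def SUP_upper)
next
  case False
  define q where "q = enn2real p"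
  have q: "q > 0" using enn2real_pos[OF assms(1) False] by (simp add: q_def)
  have "enn_pow q (f i) \<le> (\<Sum>\<^sub>\<infinity>i\<in>S. enn_pow q (f i))"
    using infsum_mono_neutral[of "\<lambda>i. enn_pow q (f i)" "{i}" _ S] assms by simp
  then have "enn_pow (1 / q) (enn_pow q (f i)) \<le> enn_pow (1 / q) (\<Sum>\<^sub>\<infinity>i\<in>S. enn_pow q (f i))"
    using q by (intro enn_pow_mono) auto
  with q False show ?thesis by (simp add: enn_pow_enn_pow_inverse lpnorm_def q_def)
qed

lemma lpnorm_less_top:
  assumes "finite S" "\<And>i. i \<in> S \<Longrightarrow> f i < top"
  shows "lpnorm p f S < top"
proof (cases "p = top")
  case True
  have "(SUP i\<in>S. f i) \<le> sum f S"
    by (rule SUP_least) (use assms in \<open>auto intro: member_le_sum\<close>)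
  also have "\<dots> < top"
    using assms by (simp add: ennreal_sum_less_top)
  finally show ?thesis using True by (simp add: lpnorm_def)
next
  case False
  have "(\<Sum>\<^sub>\<infinity>i\<in>S. enn_pow (enn2real p) (f i)) < top"
    using assms by (simp add: ennreal_sum_less_top less_top)
  with False show ?thesis by (simp add: lpnorm_def)
qed

lemma lpnorm_less_ennreal_iff:
  assumes "0 < p" "p \<noteq> top" "\<epsilon> \<ge> 0"
  shows "lpnorm p f S < ennreal \<epsilon>
     \<longleftrightarrow> (\<Sum>\<^sub>\<infinity>i\<in>S. enn_pow (enn2real p) (f i)) < ennreal (\<epsilon> powr enn2real p)"
proof -
  define q where "q = enn2real p"
  have q: "q > 0" using enn2real_pos[OF assms(1,2)] by (simp add: q_def)
  have "\<epsilon> = (\<epsilon> powr q) powr (1 / q)"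
    using q assms(3) by (simp add: powr_powr)
  then have "lpnorm p f S < ennreal \<epsilon>
      \<longleftrightarrow> enn_pow (1 / q) (\<Sum>\<^sub>\<infinity>i\<in>S. enn_pow q (f i)) < ennreal ((\<epsilon> powr q) powr (1 / q))"
    using assms(2) by (simp add: lpnorm_def q_def)
  also have "\<dots> \<longleftrightarrow> (\<Sum>\<^sub>\<infinity>i\<in>S. enn_pow q (f i)) < ennreal (\<epsilon> powr q)"
    using q by (intro enn_pow_less_ennreal_powr_iff) auto
  finally show ?thesis by (simp add: q_def)
qed

lemma lpnorm_Inl_image:
  "lpnorm p (\<lambda>s. case s of Inl i \<Rightarrow> f i | Inr j \<Rightarrow> g j) (Inl ` I) = lpnorm p f I"
  unfolding lpnorm_def by (simp add: image_image infsum_reindex comp_def)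

lemma lpnorm_bool_single:
  assumes "0 < p"
  shows "lpnorm p (\<lambda>b. if b then t else 0) (UNIV :: bool set) = t"
proof (cases "p = top")
  case True
  then show ?thesis by (simp add: lpnorm_def UNIV_bool sup.absorb2)
next
  case False
  have "enn2real p > 0" using enn2real_pos[OF assms False] .
  with False show ?thesis by (simp add: lpnorm_def UNIV_bool enn_pow_enn_pow_inverse)
qed

lemma sum_enn_pow_less:
  assumes "q > 0" "s > 0" "\<And>i. i \<in> F \<Longrightarrow> g i < ennreal ((s / (card F + 1)) powr (1 / q))"
  shows "(\<Sum>i\<in>F. enn_pow q (g i)) < ennreal s"
proof -
  have "(\<Sum>i\<in>F. enn_pow q (g i)) \<le> (\<Sum>i\<in>F. ennreal (s / (card F + 1)))"
  proof (rule sum_mono)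
    fix i assume "i \<in> F"
    have "((s / (card F + 1)) powr (1 / q)) powr q = s / (card F + 1)"
      using assms(1,2) by (simp add: powr_powr)
    then show "enn_pow q (g i) \<le> ennreal (s / (card F + 1))"
      using enn_pow_less_ennreal_powr_iff[OF assms(1), of "(s / (card F + 1)) powr (1 / q)"]
        assms(3)[OF \<open>i \<in> F\<close>] by (simp add: less_imp_le)
  qed
  also have "\<dots> = ennreal (card F * (s / (card F + 1)))"
    by (simp add: ennreal_of_nat_eq_real_of_nat)
      (metis ennreal_mult' of_nat_0_le_iff times_divide_eq_right)
  also have "\<dots> < ennreal s"
  proof (intro ennreal_lessI assms(2))
    have "real (card F) < card F + 1" by simp
    then show "card F * (s / (card F + 1)) < s"
      using assms(2) by (simp add: divide_less_eq mult.commute)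
  qed
  finally show ?thesis .
qed

lemma lpnorm_top_less_add_finite:
  assumes "finite F" "F \<subseteq> S" "lpnorm top f (S - F) < c"
    "\<And>i. i \<in> F \<Longrightarrow> g i < c" "\<And>i. i \<in> S - F \<Longrightarrow> g i = f i"
  shows "lpnorm top g S < c"
proof -
  have "0 < c"
    using assms(3) by (rule le_less_trans[OF zero_le])
  then have head: "(SUP i\<in>F. g i) < c"
    using assms(1,4) by (cases "F = {}") (auto simp: finite_Sup_less_iff bot_ennreal)
  have "(SUP i\<in>S - F. g i) = (SUP i\<in>S - F. f i)"
    using assms(5) by (rule SUP_cong[OF refl])
  then have tail: "(SUP i\<in>S - F. g i) < c"
    using assms(3) by (simp add: lpnorm_def)
  have "S = F \<union> (S - F)"
    using assms(2) by blast
  then have "(SUP i\<in>S. g i) = sup (SUP i\<in>F. g i) (SUP i\<in>S - F. g i)"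
    by (metis SUP_union)
  with head tail show ?thesis
    by (simp add: lpnorm_def sup_max)
qed

text \<open>For finite \<open>p\<close> the room left below \<open>\<epsilon>\<^sup>p\<close> by the tail is shared equally among the
  finitely many new entries.\<close>

lemma lpnorm_finite_less_add_finite:
  assumes "0 < p" "p \<noteq> top" "finite F" "F \<subseteq> S" "lpnorm p f (S - F) < ennreal \<epsilon>"
  obtains \<eta> where "\<eta> > 0"
    "\<And>g. (\<And>i. i \<in> F \<Longrightarrow> g i < ennreal \<eta>) \<Longrightarrow> (\<And>i. i \<in> S - F \<Longrightarrow> g i = f i)
      \<Longrightarrow> lpnorm p g S < ennreal \<epsilon>"
proof -
  define q where "q = enn2real p"
  have q: "q > 0" using enn2real_pos[OF assms(1,2)] by (simp add: q_def)
  have "0 < ennreal \<epsilon>"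
    using assms(5) by (rule le_less_trans[OF zero_le])
  then have \<epsilon>: "\<epsilon> \<ge> 0" by simp
  note lpnorm_less = lpnorm_less_ennreal_iff[OF assms(1,2) \<epsilon>, folded q_def]
  obtain t where t: "(\<Sum>\<^sub>\<infinity>i\<in>S - F. enn_pow q (f i)) = ennreal t" "0 \<le> t" "t < \<epsilon> powr q"
    using assms(5) unfolding lpnorm_less by (cases "\<Sum>\<^sub>\<infinity>i\<in>S - F. enn_pow q (f i)") (auto simp: ennreal_less_iff)
  define slack where "slack = \<epsilon> powr q - t"
  have slack: "slack > 0" using t by (simp add: slack_def)
  show ?thesis
  proof (rule that)
    show "(slack / (card F + 1)) powr (1 / q) > 0"
      using slack by simp
  next
    fix g assume small: "\<And>i. i \<in> F \<Longrightarrow> g i < ennreal ((slack / (card F + 1)) powr (1 / q))"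
      and eq: "\<And>i. i \<in> S - F \<Longrightarrow> g i = f i"
    have "(\<Sum>\<^sub>\<infinity>i\<in>S - F. enn_pow q (g i)) = ennreal t"
      using eq t(1) by (metis (no_types, lifting) infsum_cong)
    then have "(\<Sum>\<^sub>\<infinity>i\<in>S. enn_pow q (g i)) = (\<Sum>i\<in>F. enn_pow q (g i)) + ennreal t"
      using ennreal_infsum_split_finite[OF assms(3,4)] by simp
    also have "\<dots> < ennreal slack + ennreal t"
      using sum_enn_pow_less[OF q slack small]
      by (simp only: add.commute[of _ "ennreal t"] ennreal_add_left_cancel_less) simp
    also have "\<dots> = ennreal (\<epsilon> powr q)"
      using slack t by (simp add: slack_def flip: ennreal_plus)
    finally show "lpnorm p g S < ennreal \<epsilon>"
      unfolding lpnorm_less .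
  qed
qed

lemma lpnorm_less_add_finite:
  assumes "0 < p" "finite F" "F \<subseteq> S" "lpnorm p f (S - F) < ennreal \<epsilon>"
  obtains \<eta> where "\<eta> > 0"
    "\<And>g. (\<And>i. i \<in> F \<Longrightarrow> g i < ennreal \<eta>) \<Longrightarrow> (\<And>i. i \<in> S - F \<Longrightarrow> g i = f i)
      \<Longrightarrow> lpnorm p g S < ennreal \<epsilon>"
proof (cases "p = top")
  case True
  have "0 < ennreal \<epsilon>"
    using assms(4) by (rule le_less_trans[OF zero_le])
  then show ?thesis
    using that[of \<epsilon>] lpnorm_top_less_add_finite[OF assms(2,3)] assms(4) True by simp
next
  case False
  then show ?thesis
    using lpnorm_finite_less_add_finite[OF assms(1) False assms(2-4)] that by blast
qed

section \<open>Matchings\<close>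

lemma Wp_le_match_cost:
  assumes "(K, \<phi>, z, w) \<in> matchings A \<alpha> \<beta>"
  shows "Wp p d A \<alpha> \<beta> \<le> match_cost p d \<alpha> \<beta> K \<phi> z w"
  unfolding Wp_def by (rule INF_lower2[OF assms]) simp

lemma match_cost_empty_dgm:
  "match_cost p d \<alpha> empty_dgm {} \<phi> z w = lpnorm p (\<lambda>i. d (snd \<alpha> i) (z i)) (fst \<alpha>)"
  unfolding match_cost_def by (simp add: empty_dgm_def lpnorm_Inl_image)

lemma Wp_empty_dgm_le:
  assumes "\<And>i. i \<in> fst \<alpha> \<Longrightarrow> z i \<in> A"
  shows "Wp p d A \<alpha> empty_dgm \<le> lpnorm p (\<lambda>i. d (snd \<alpha> i) (z i)) (fst \<alpha>)"
proof -
  have "({}, id, z, z) \<in> matchings A \<alpha> empty_dgm"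
    using assms by (auto simp: matchings_def empty_dgm_def)
  then show ?thesis
    using Wp_le_match_cost match_cost_empty_dgm by metis
qed

lemma Wp_empty_dgm_less:
  assumes "Wp p d A \<alpha> empty_dgm < c"
  obtains z where "\<And>i. i \<in> fst \<alpha> \<Longrightarrow> z i \<in> A"
    "lpnorm p (\<lambda>i. d (snd \<alpha> i) (z i)) (fst \<alpha>) < c"
proof -
  obtain K \<phi> z w where m: "(K, \<phi>, z, w) \<in> matchings A \<alpha> empty_dgm"
    and cost: "match_cost p d \<alpha> empty_dgm K \<phi> z w < c"
    using assms unfolding Wp_def by (auto simp: INF_less_iff)
  have "K = {}" using m by (auto simp: matchings_def empty_dgm_def)
  with m cost show ?thesis
    by (intro that[of z]) (auto simp: matchings_def match_cost_empty_dgm)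
qed

lemma Wp_le_partial_identity:
  assumes "F \<subseteq> I" "\<And>i. i \<in> I - F \<Longrightarrow> z i \<in> A"
  shows "Wp p d A (I, x) (F, y) \<le> lpnorm p (\<lambda>i. if i \<in> F then d (x i) (y i) else d (x i) (z i)) I"
proof -
  have "(F, id, z, z) \<in> matchings A (I, x) (F, y)"
    using assms by (auto simp: matchings_def)
  then have "Wp p d A (I, x) (F, y) \<le> match_cost p d (I, x) (F, y) F id z z"
    by (rule Wp_le_match_cost)
  also have "\<dots> = lpnorm p (\<lambda>i. if i \<in> F then d (x i) (y i) else d (x i) (z i)) I"
    unfolding match_cost_def fst_conv snd_conv id_apply image_id Diff_cancel image_empty
      Un_empty_right lpnorm_Inl_image ..
  finally show ?thesis .
qed

lemma Wp_singleton_less: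
  assumes "0 < p" "Wp p d A ({i}, \<lambda>_. x) \<beta> < e"
  shows "(\<exists>j\<in>fst \<beta>. d x (snd \<beta> j) < e) \<or> (\<exists>a\<in>A. d x a < e)"
proof -
  obtain K \<phi> z w where m: "(K, \<phi>, z, w) \<in> matchings A ({i}, \<lambda>_. x) \<beta>"
    and cost: "match_cost p d ({i}, \<lambda>_. x) \<beta> K \<phi> z w < e"
    using assms(2) unfolding Wp_def by (auto simp: INF_less_iff)
  have "(if i \<in> K then d x (snd \<beta> (\<phi> i)) else d x (z i)) \<le> match_cost p d ({i}, \<lambda>_. x) \<beta> K \<phi> z w"
    unfolding match_cost_def by (rule order_trans[OF _ lpnorm_ge[OF assms(1), of "Inl i"]]) auto
  then have close: "(if i \<in> K then d x (snd \<beta> (\<phi> i)) else d x (z i)) < e"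
    using cost by (rule le_less_trans)
  show ?thesis
  proof (cases "i \<in> K")
    case True
    then have "\<phi> i \<in> fst \<beta>" using m by (auto simp: matchings_def)
    with True close show ?thesis by auto
  next
    case False
    then have "z i \<in> A" using m by (auto simp: matchings_def)
    with False close show ?thesis by auto
  qed
qed

section \<open>Diagrams of finite cost\<close>

lemma setdist_e_less_obtains:
  assumes "setdist_e d x A < c"
  obtains a where "a \<in> A" "d x a < c"
  using assms by (auto simp: setdist_e_def INF_less_iff)

lemma setdist_e_le: "a \<in> A \<Longrightarrow> setdist_e d x A \<le> d x a"
  by (simp add: setdist_e_def INF_lower)

lemma Dp_point_in_diff: "\<alpha> \<in> Dp p d X A \<Longrightarrow> i \<in> fst \<alpha> \<Longrightarrow> snd \<alpha> i \<in> X - A"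
  by (cases \<alpha>) (auto simp: Dp_def dgms_def split: if_splits)

lemma finite_dgm_in_Dp:
  assumes "finite F" "\<And>i. i \<in> F \<Longrightarrow> y i \<in> X - A"
  shows "(F, y) \<in> Dp p d X A"
proof -
  define L where "L = {i\<in>F. setdist_e d (y i) A < top}"
  have "\<forall>i\<in>L. \<exists>a\<in>A. d (y i) a < top"
    unfolding L_def by (blast elim: setdist_e_less_obtains)
  then obtain z where z: "\<And>i. i \<in> L \<Longrightarrow> z i \<in> A \<and> d (y i) (z i) < top"
    by metis
  have "Wp p d A (L, y) empty_dgm \<le> lpnorm p (\<lambda>i. d (y i) (z i)) L"
    using Wp_empty_dgm_le[of "(L, y)" z A p d] z by simp
  also have "\<dots> < top"
    using z assms(1) by (intro lpnorm_less_top) (auto simp: L_def)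
  finally show ?thesis
    using assms by (auto simp: Dp_def dgms_def u_part_def l_part_def L_def)
qed

lemma Dp_top_tail:
  assumes "(I, x) \<in> Dp top d X A" "\<epsilon> > 0"
  obtains F z where "finite F" "F \<subseteq> I" "\<And>i. i \<in> I - F \<Longrightarrow> z i \<in> A"
    "lpnorm top (\<lambda>i. d (x i) (z i)) (I - F) < ennreal \<epsilon>"
proof -
  define F where "F = {i\<in>I. \<not> setdist_e d (x i) A < ennreal (\<epsilon> / 2)}"
  have "finite F"
    using assms unfolding Dp_def u_part_def F_def by (auto dest: spec[of _ "\<epsilon> / 2"])
  have "\<forall>i\<in>I - F. \<exists>a\<in>A. d (x i) a < ennreal (\<epsilon> / 2)"
    unfolding F_def by (blast elim: setdist_e_less_obtains)
  then obtain z where z: "\<And>i. i \<in> I - F \<Longrightarrow> z i \<in> A \<and> d (x i) (z i) < ennreal (\<epsilon> / 2)"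
    by metis
  have "lpnorm top (\<lambda>i. d (x i) (z i)) (I - F) \<le> ennreal (\<epsilon> / 2)"
    unfolding lpnorm_def using z by (auto intro: SUP_least less_imp_le)
  also have "\<dots> < ennreal \<epsilon>"
    using assms(2) by (simp add: ennreal_lessI)
  finally show ?thesis
    using \<open>finite F\<close> z by (intro that[of F z]) (auto simp: F_def)
qed

lemma Dp_finite_tail:
  assumes "(I, x) \<in> Dp p d X A" "0 < p" "p \<noteq> top" "\<epsilon> > 0"
  obtains F z where "finite F" "F \<subseteq> I" "\<And>i. i \<in> I - F \<Longrightarrow> z i \<in> A"
    "lpnorm p (\<lambda>i. d (x i) (z i)) (I - F) < ennreal \<epsilon>"
proof -
  define q where "q = enn2real p"
  define U where "U = {i\<in>I. \<not> setdist_e d (x i) A < top}"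
  define L where "L = {i\<in>I. setdist_e d (x i) A < top}"
  have "finite U" and "Wp p d A (L, x) empty_dgm < top"
    using assms(1,3) by (auto simp: Dp_def u_part_def l_part_def U_def L_def)
  then obtain z where z: "\<And>i. i \<in> L \<Longrightarrow> z i \<in> A"
    and "lpnorm p (\<lambda>i. d (x i) (z i)) L < top"
    using Wp_empty_dgm_less[of p d A "(L, x)" top] by auto
  then have "(\<Sum>\<^sub>\<infinity>i\<in>L. enn_pow q (d (x i) (z i))) < top"
    using assms(3) by (simp add: lpnorm_def q_def)
  moreover have "0 < ennreal (\<epsilon> powr q)"
    using assms(4) by simp
  ultimately obtain F1 where F1: "finite F1" "F1 \<subseteq> L"
    "(\<Sum>\<^sub>\<infinity>i\<in>L - F1. enn_pow q (d (x i) (z i))) < ennreal (\<epsilon> powr q)"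
    by (rule ennreal_infsum_tail_less)
  have "lpnorm p (\<lambda>i. d (x i) (z i)) (L - F1) < ennreal \<epsilon>"
    using F1(3) lpnorm_less_ennreal_iff[OF assms(2,3) less_imp_le[OF assms(4)]]
    unfolding q_def by blast
  moreover have "I - (U \<union> F1) = L - F1"
    by (auto simp: U_def L_def)
  moreover have "U \<union> F1 \<subseteq> I"
    using F1(2) by (auto simp: U_def L_def)
  ultimately show ?thesis
    using \<open>finite U\<close> F1(1) z by (intro that[of "U \<union> F1" z]) simp_all
qed

lemma Dp_tail:
  assumes "(I, x) \<in> Dp p d X A" "0 < p" "\<epsilon> > 0"
  obtains F z where "finite F" "F \<subseteq> I" "\<And>i. i \<in> I - F \<Longrightarrow> z i \<in> A"
    "lpnorm p (\<lambda>i. d (x i) (z i)) (I - F) < ennreal \<epsilon>"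
  using assms Dp_top_tail[of I x d X A \<epsilon>] Dp_finite_tail[of I x p d X A \<epsilon>]
  by (cases "p = top") blast+

section \<open>Separability\<close>

lemma dense_diff_closed:
  assumes "eclosed X d A" "\<And>x e. x \<in> X \<Longrightarrow> e > 0 \<Longrightarrow> \<exists>c\<in>D. d x c < e"
    "x \<in> X - A" "\<eta> > 0"
  shows "\<exists>y\<in>D - A. d x y < \<eta>"
proof -
  have "setdist_e d x A > 0"
    using assms(1,3) by (auto simp: eclosed_def zero_less_iff_neq_zero)
  with assms(2-4) obtain y where y: "y \<in> D" "d x y < min \<eta> (setdist_e d x A)"
    by (metis Diff_iff min_less_iff_conj)
  have "y \<notin> A"
  proof
    assume "y \<in> A"
    then have "setdist_e d x A \<le> d x y" by (rule setdist_e_le)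
    with y(2) show False by (simp add: leD)
  qed
  with y show ?thesis by auto
qed

lemma Dp_approx_by_finite_dgm:
  assumes "eclosed X d A" "\<And>x e. x \<in> X \<Longrightarrow> e > 0 \<Longrightarrow> \<exists>c\<in>D. d x c < e"
    "(I, x) \<in> Dp p d X A" "0 < p" "\<epsilon> > 0"
  obtains F y where "finite F" "y \<in> F \<rightarrow>\<^sub>E D - A" "Wp p d A (I, x) (F, y) < ennreal \<epsilon>"
proof -
  have x: "\<And>i. i \<in> I \<Longrightarrow> x i \<in> X - A"
    using Dp_point_in_diff[OF assms(3)] by simp
  obtain F z where F: "finite F" "F \<subseteq> I" and z: "\<And>i. i \<in> I - F \<Longrightarrow> z i \<in> A"
    and tail: "lpnorm p (\<lambda>i. d (x i) (z i)) (I - F) < ennreal \<epsilon>"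
    using Dp_tail[OF assms(3-5)] by blast
  obtain \<eta> where \<eta>: "\<eta> > 0" and perturb: "\<And>g. (\<And>i. i \<in> F \<Longrightarrow> g i < ennreal \<eta>)
      \<Longrightarrow> (\<And>i. i \<in> I - F \<Longrightarrow> g i = d (x i) (z i)) \<Longrightarrow> lpnorm p g I < ennreal \<epsilon>"
    using lpnorm_less_add_finite[OF assms(4) F tail] by blast
  have "\<forall>i\<in>F. \<exists>y\<in>D - A. d (x i) y < ennreal \<eta>"
    using assms(1,2) F(2) x \<eta> by (intro ballI dense_diff_closed) auto
  then obtain y where y: "\<And>i. i \<in> F \<Longrightarrow> y i \<in> D - A \<and> d (x i) (y i) < ennreal \<eta>"
    by metis
  have "Wp p d A (I, x) (F, restrict y F)
      \<le> lpnorm p (\<lambda>i. if i \<in> F then d (x i) (restrict y F i) else d (x i) (z i)) I"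
    using F(2) z by (rule Wp_le_partial_identity)
  also have "\<dots> < ennreal \<epsilon>"
    using y by (intro perturb) auto
  finally show ?thesis
    using F(1) y by (intro that[of F "restrict y F"]) auto
qed

lemma separable_Dp:
  assumes "metric_pair X d A" "0 < p" "separable_e X d"
  shows "separable_e (Dp p d X A) (Wp p d A)"
proof -
  obtain D where D: "D \<subseteq> X" "countable D" "\<And>x e. x \<in> X \<Longrightarrow> e > 0 \<Longrightarrow> \<exists>c\<in>D. d x c < e"
    using assms(3) unfolding separable_e_def by blast
  have closed: "eclosed X d A"
    using assms(1) by (simp add: metric_pair_def)
  define DD where "DD = (\<Union>F\<in>{F :: nat set. finite F}. (\<lambda>y. (F, y)) ` (F \<rightarrow>\<^sub>E D - A))"
  have "countable DD"
    unfolding DD_def using D(2)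
    by (intro countable_UN[OF countable_Collect_finite] countable_image countable_PiE) auto
  moreover have "DD \<subseteq> Dp p d X A"
    unfolding DD_def using D(1) by (auto intro!: finite_dgm_in_Dp)
  moreover have "\<exists>\<sigma>\<in>DD. Wp p d A \<alpha> \<sigma> < e" if \<alpha>_Dp: "\<alpha> \<in> Dp p d X A" and "e > 0" for \<alpha> e
  proof -
    obtain I x where \<alpha>: "\<alpha> = (I, x)" by fastforce
    obtain \<epsilon> where \<epsilon>: "\<epsilon> > 0" "ennreal \<epsilon> < e"
      using \<open>e > 0\<close>
      by (metis dense ennreal_cases ennreal_less_top order_le_less order_less_imp_not_less)
    obtain F y where "finite F" "y \<in> F \<rightarrow>\<^sub>E D - A" "Wp p d A (I, x) (F, y) < ennreal \<epsilon>"
      using Dp_approx_by_finite_dgm[OF closed D(3) \<alpha>_Dp[unfolded \<alpha>] assms(2) \<epsilon>(1)] by blast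
    then show ?thesis
      using \<epsilon>(2) unfolding \<alpha> DD_def by (blast intro: less_trans)
  qed
  ultimately show ?thesis
    unfolding separable_e_def by blast
qed

lemma dquot_singletons_le: "dquot p d A {x} {y} \<le> d x y"
  by (simp add: dquot_def dq_def)

lemma dquot_self_eq_0:
  assumes "metric_pair X d A" "A \<noteq> {}"
  shows "dquot p d A A A = 0"
proof -
  have "(SOME a. a \<in> A) \<in> X"
    using assms some_in_eq[of A] by (auto simp: metric_pair_def eclosed_def)
  then have "d (SOME a. a \<in> A) (SOME a. a \<in> A) = 0"
    using assms(1) by (simp add: metric_pair_def emetric_on_def)
  then show ?thesis
    by (simp add: dquot_def dq_def)
qed

lemma dquot_singleton_le:
  assumes "metric_pair X d A" "0 < p" "a \<in> A"
  shows "dquot p d A {x} A \<le> d x a"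
proof -
  define a\<^sub>0 where "a\<^sub>0 = (SOME a. a \<in> A)"
  have "a\<^sub>0 \<in> A"
    using assms(3) unfolding a\<^sub>0_def by (rule someI)
  then have "setdist_e d a\<^sub>0 A = 0"
    using assms(1) setdist_e_le[of a\<^sub>0 A d a\<^sub>0]
    by (auto simp: metric_pair_def emetric_on_def eclosed_def)
  have "dquot p d A {x} A = dq p d A x a\<^sub>0"
    by (simp add: dquot_def a\<^sub>0_def)
  also have "\<dots> \<le> lpnorm p (\<lambda>b. if b then setdist_e d x A else setdist_e d a\<^sub>0 A) UNIV"
    unfolding dq_def by (rule min.cobounded2)
  also have "\<dots> = lpnorm p (\<lambda>b. if b then setdist_e d x A else 0) UNIV"
    unfolding \<open>setdist_e d a\<^sub>0 A = 0\<close> ..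
  also have "\<dots> = setdist_e d x A"
    using assms(2) by (rule lpnorm_bool_single)
  also have "\<dots> \<le> d x a"
    using assms(3) by (rule setdist_e_le)
  finally show ?thesis .
qed

lemma dquot_less_of_Wp_singleton_less:
  assumes "metric_pair X d A" "0 < p" "Wp p d A ({i}, \<lambda>_. x) \<sigma> < e"
  shows "(\<exists>j\<in>fst \<sigma>. dquot p d A {x} {snd \<sigma> j} < e) \<or> (A \<noteq> {} \<and> dquot p d A {x} A < e)"
proof -
  from Wp_singleton_less[OF assms(2,3)]
  consider (point) j where "j \<in> fst \<sigma>" "d x (snd \<sigma> j) < e"
    | (boundary) a where "a \<in> A" "d x a < e"
    by blast
  then show ?thesis
  proof cases
    case point
    then show ?thesis
      using dquot_singletons_le[of p d A x] by (blast intro: le_less_trans)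
  next
    case boundary
    then show ?thesis
      using dquot_singleton_le[OF assms(1,2) boundary(1), of x] by (blast intro: le_less_trans)
  qed
qed

lemma separable_quotX:
  assumes "metric_pair X d A" "0 < p" "separable_e (Dp p d X A) (Wp p d A)"
  shows "separable_e (quotX X A) (dquot p d A)"
proof -
  obtain DD where DD: "DD \<subseteq> Dp p d X A" "countable DD"
    "\<And>\<alpha> e. \<alpha> \<in> Dp p d X A \<Longrightarrow> e > 0 \<Longrightarrow> \<exists>\<sigma>\<in>DD. Wp p d A \<alpha> \<sigma> < e"
    using assms(3) unfolding separable_e_def by blast
  have A_X: "A \<subseteq> X"
    using assms(1) by (simp add: metric_pair_def eclosed_def)
  define cls where "cls x = (if x \<in> A then A else {x})" for x
  define Q where "Q = (\<Union>\<sigma>\<in>DD. snd \<sigma> ` fst \<sigma>) \<union> (A \<inter> {SOME a. a \<in> A})"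
  have points: "snd \<sigma> i \<in> X - A" if "\<sigma> \<in> DD" "i \<in> fst \<sigma>" for \<sigma> i
    using Dp_point_in_diff[OF subsetD[OF DD(1) that(1)] that(2)] .
  have A_cls: "A \<in> cls ` Q" if "A \<noteq> {}"
    using that some_in_eq[of A] unfolding Q_def cls_def by (intro image_eqI[of _ _ "SOME a. a \<in> A"]) auto
  have point_cls: "{snd \<sigma> j} \<in> cls ` Q" if "\<sigma> \<in> DD" "j \<in> fst \<sigma>" for \<sigma> j
    using points[OF that] that unfolding Q_def cls_def by (intro image_eqI[of _ _ "snd \<sigma> j"]) auto
  have "cls ` Q \<subseteq> quotX X A"
    unfolding quotX_def cls_def Q_def using points A_X by blast
  moreover have "countable (cls ` Q)"
    unfolding Q_def using DD(2) by (intro countable_image countable_Un countable_UN) auto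
  moreover have "\<exists>c'\<in>cls ` Q. dquot p d A c c' < e" if "c \<in> quotX X A" "e > 0" for c e
  proof -
    obtain x where x: "x \<in> X" "c = cls x"
      using \<open>c \<in> quotX X A\<close> unfolding quotX_def cls_def by blast
    show ?thesis
    proof (cases "x \<in> A")
      case True
      then have "A \<noteq> {}" "c = A"
        using x(2) by (auto simp: cls_def)
      then show ?thesis
        using A_cls dquot_self_eq_0[OF assms(1)] \<open>e > 0\<close> by (intro bexI[of _ A]) simp_all
    next
      case False
      have "({0}, \<lambda>_. x) \<in> Dp p d X A"
        using False x(1) by (intro finite_dgm_in_Dp) auto
      then obtain \<sigma> where \<sigma>: "\<sigma> \<in> DD" "Wp p d A ({0}, \<lambda>_. x) \<sigma> < e"
        using DD(3) \<open>e > 0\<close> by blast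
      have "c = {x}"
        using False x(2) by (simp add: cls_def)
      then show ?thesis
        using dquot_less_of_Wp_singleton_less[OF assms(1,2) \<sigma>(2)] point_cls[OF \<sigma>(1)] A_cls
        by blast
    qed
  qed
  ultimately show ?thesis
    unfolding separable_e_def by blast
qed

theorem theorem6p2:
  fixes X A :: "'a set" and d :: "'a \<Rightarrow> 'a \<Rightarrow> ennreal" and p :: ennreal
  assumes "metric_pair X d A" and "1 \<le> p"
  shows "(separable_e X d \<longrightarrow> separable_e (Dp p d X A) (Wp p d A))
       \<and> (separable_e (Dp p d X A) (Wp p d A) \<longrightarrow> separable_e (quotX X A) (dquot p d A))"
proof -
  have "0 < p"
    using assms(2) by (rule less_le_trans[OF zero_less_one])
  then show ?thesis
    using separable_Dp[OF assms(1)] separable_quotX[OF assms(1)] by blast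
qed

end
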